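(* Let $A$ be a bounded linear operator on a complex Hilbert space $\mathcal H\neq\{0\}$. Then $W_0(A)\cap\partial W(A)\neq\emptyset$ if and only if $A$ is normaloid.
   Context: The numerical range of $A$ is $W(A)=\{\langle Ax,x\rangle : x\in\mathcal H,\ \|x\|=1\}$, and $\partial W(A)$ denotes its boundary in $\mathbb C$. The maximal numerical range $W_0(A)$ is the set of all $\lambda\in\mathbb C$ for which there exist unit vectors $x_n\in\mathcal H$ with $\|Ax_n\|\to\|A\|$ and $\langle Ax_n,x_n\rangle\to\lambda$. The operator $A$ is called normaloid if $\sigma(A)\cap\mathcal C_A\neq\emptyset$, where $\sigma(A)$ is the spectrum and $\mathcal C_A=\{z\in\mathbb C: |z|=\|A\|\}$; equivalently, if the closure of $W(A)$ meets $\mathcal C_A$, i.e. the numerical radius $\sup\{|z|: z\in W(A)\}$ equals $\|A\|$. *)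

theory Defs
  imports "HOL-Analysis.Analysis"
begin

class complex_hilbert = banach +
  fixes scaleC :: "complex \<Rightarrow> 'a \<Rightarrow> 'a"
    and cinner :: "'a \<Rightarrow> 'a \<Rightarrow> complex"
  assumes scaleC_of_real: "scaleC (of_real r) x = scaleR r x"
    and scaleC_add_right: "scaleC a (x + y) = scaleC a x + scaleC a y"
    and scaleC_add_left: "scaleC (a + b) x = scaleC a x + scaleC b x"
    and scaleC_scaleC: "scaleC a (scaleC b x) = scaleC (a * b) x"
    and scaleC_one: "scaleC 1 x = x"
    and cinner_add_left: "cinner (x + y) z = cinner x z + cinner y z"
    and cinner_scaleC_left: "cinner (scaleC a x) y = a * cinner x y"
    and cinner_commute: "cinner y x = cnj (cinner x y)"
    and cinner_self_norm: "cinner x x = of_real ((norm x)\<^sup>2)"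

definition bounded_clinear_op :: "('a::complex_hilbert \<Rightarrow> 'a) \<Rightarrow> bool" where
  "bounded_clinear_op A \<longleftrightarrow> bounded_linear A \<and> (\<forall>c x. A (scaleC c x) = scaleC c (A x))"

definition numerical_range :: "('a::complex_hilbert \<Rightarrow> 'a) \<Rightarrow> complex set" where
  "numerical_range A = {cinner (A x) x | x. norm x = 1}"

definition max_numerical_range :: "('a::complex_hilbert \<Rightarrow> 'a) \<Rightarrow> complex set" where
  "max_numerical_range A = {l. \<exists>x :: nat \<Rightarrow> 'a. (\<forall>n. norm (x n) = 1)
       \<and> (\<lambda>n. norm (A (x n))) \<longlonglongrightarrow> onorm A
       \<and> (\<lambda>n. cinner (A (x n)) (x n)) \<longlonglongrightarrow> l}"

definition op_spectrum :: "('a::complex_hilbert \<Rightarrow> 'a) \<Rightarrow> complex set" where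
  "op_spectrum A = {l. \<not> (\<exists>B. bounded_clinear_op B
       \<and> (\<forall>x. B (A x - scaleC l x) = x) \<and> (\<forall>x. A (B x) - scaleC l (B x) = x))}"

definition normaloid :: "('a::complex_hilbert \<Rightarrow> 'a) \<Rightarrow> bool" where
  "normaloid A \<longleftrightarrow> op_spectrum A \<inter> {z. cmod z = onorm A} \<noteq> {}"

end

theory Submission
  imports Defs
begin

text \<open>
  If \<open>m \<in> \<sigma>(A)\<close> has \<open>|m| = \<parallel>A\<parallel>\<close>, then \<open>A - m\<close> cannot be bounded below (bounded below
  operators close to the invertible \<open>A - \<mu>\<close>, \<open>|\<mu>| > \<parallel>A\<parallel>\<close>, are invertible), so \<open>m\<close> is an
  approximate eigenvalue; an approximate eigenvector sequence puts \<open>m\<close> into \<open>W\<^sub>0(A)\<close> and into the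
  closure of \<open>W(A)\<close>, and \<open>|W(A)| \<le> \<parallel>A\<parallel>\<close> puts it on the boundary.

  Conversely, let \<open>l \<in> W\<^sub>0(A) \<inter> \<partial>W(A)\<close>. By the Toeplitz--Hausdorff theorem \<open>W(A)\<close> is convex,
  so after a rotation \<open>B\<close> of \<open>A\<close> we have \<open>Re W(B) \<le> a\<close> and unit vectors \<open>x\<^sub>n\<close> with
  \<open>\<parallel>B x\<^sub>n\<parallel> \<rightarrow> N = \<parallel>B\<parallel>\<close> and \<open>Re \<langle>B x\<^sub>n, x\<^sub>n\<rangle> \<rightarrow> a\<close>. The positive operators \<open>a - Re B\<close> and
  \<open>N\<^sup>2 - B\<^sup>*B\<close> are then asymptotically null along \<open>x\<^sub>n\<close>, which forces
  \<open>(B\<^sup>2 - 2aB + N\<^sup>2) x\<^sub>n \<rightarrow> 0\<close>. Since \<open>B\<^sup>2 - 2aB + N\<^sup>2 = (B - m)(B - m')\<close> with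
  \<open>m, m' = a \<plusminus> i\<surd>(N\<^sup>2 - a\<^sup>2)\<close>, one of \<open>m, m'\<close>, both of modulus \<open>N\<close>, is an approximate
  eigenvalue of \<open>B\<close>; rotating back gives a spectral value of \<open>A\<close> of modulus \<open>\<parallel>A\<parallel>\<close>.
\<close>

section \<open>Complex Hilbert spaces\<close>

lemma scaleC_zero_left [simp]: "scaleC 0 (x::'a::complex_hilbert) = 0"
  using scaleC_of_real [of 0 x] by simp

lemma scaleC_zero_right [simp]: "scaleC a (0::'a::complex_hilbert) = 0"
  using scaleC_add_right [of a 0 0] by simp

lemma scaleC_minus_left: "scaleC (- a) (x::'a::complex_hilbert) = - scaleC a x"
  using scaleC_add_left [of a "-a" x] by (simp add: add_eq_0_iff)

lemma scaleC_minus_right: "scaleC a (- (x::'a::complex_hilbert)) = - scaleC a x"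
  using scaleC_add_right [of a x "-x"] by (simp add: add_eq_0_iff)

lemma scaleC_diff_left: "scaleC (a - b) (x::'a::complex_hilbert) = scaleC a x - scaleC b x"
  using scaleC_add_left [of a "-b" x] by (simp add: scaleC_minus_left)

lemma scaleC_diff_right: "scaleC a ((x::'a::complex_hilbert) - y) = scaleC a x - scaleC a y"
  using scaleC_add_right [of a x "-y"] by (simp add: scaleC_minus_right)

lemma cinner_add_right: "cinner (x::'a::complex_hilbert) (y + z) = cinner x y + cinner x z"
  by (metis cinner_commute cinner_add_left complex_cnj_add)

lemma cinner_scaleC_right: "cinner (x::'a::complex_hilbert) (scaleC a y) = cnj a * cinner x y"
  by (metis cinner_commute cinner_scaleC_left complex_cnj_mult)

lemma cinner_zero_left [simp]: "cinner 0 (y::'a::complex_hilbert) = 0"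
  using cinner_add_left [of 0 0 y] by simp

lemma cinner_zero_right [simp]: "cinner (y::'a::complex_hilbert) 0 = 0"
  using cinner_add_right [of y 0 0] by simp

lemma cinner_minus_left: "cinner (- (x::'a::complex_hilbert)) y = - cinner x y"
  using cinner_add_left [of x "-x" y] by (simp add: add_eq_0_iff)

lemma cinner_minus_right: "cinner (y::'a::complex_hilbert) (- x) = - cinner y x"
  using cinner_add_right [of y x "-x"] by (simp add: add_eq_0_iff)

lemma cinner_diff_left: "cinner ((x::'a::complex_hilbert) - z) y = cinner x y - cinner z y"
  using cinner_add_left [of x "-z" y] by (simp add: cinner_minus_left)

lemma cinner_diff_right: "cinner (y::'a::complex_hilbert) (x - z) = cinner y x - cinner y z"
  using cinner_add_right [of y x "-z"] by (simp add: cinner_minus_right)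

lemma cnj_cinner [simp]: "cnj (cinner (x::'a::complex_hilbert) y) = cinner y x"
  by (metis cinner_commute)

lemmas cinner_simps = cinner_add_left cinner_add_right cinner_diff_left cinner_diff_right
  cinner_scaleC_left cinner_scaleC_right cinner_minus_left cinner_minus_right

lemma Re_cinner_commute: "Re (cinner (x::'a::complex_hilbert) y) = Re (cinner y x)"
  by (simp only: cinner_commute [of x y] cnj.sel)

lemma Re_cinner_self: "Re (cinner (x::'a::complex_hilbert) x) = (norm x)\<^sup>2"
  by (simp add: cinner_self_norm)

lemma cinner_self_eq_1: "norm (x::'a::complex_hilbert) = 1 \<Longrightarrow> cinner x x = 1"
  by (simp add: cinner_self_norm)

lemma mult_cnj_cmod: "z * cnj z = of_real ((cmod z)\<^sup>2)"
  using complex_norm_square [of z] by simp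

lemma norm_scaleC: "norm (scaleC c (x::'a::complex_hilbert)) = cmod c * norm x"
proof -
  have "(norm (scaleC c x))\<^sup>2 = Re (c * cnj c * cinner x x)"
    by (simp only: Re_cinner_self [symmetric] cinner_scaleC_left cinner_scaleC_right
        mult.left_commute [of "cnj c"] mult.assoc)
  also have "\<dots> = (cmod c * norm x)\<^sup>2"
    by (simp only: mult_cnj_cmod cinner_self_norm) (simp add: power_mult_distrib)
  finally show ?thesis
    by (simp add: power2_eq_iff_nonneg)
qed

lemma norm_normalize:
  "(x::'a::complex_hilbert) \<noteq> 0 \<Longrightarrow> norm (scaleC (of_real (1 / norm x)) x) = 1"
  by (simp add: norm_scaleC norm_divide)

section \<open>Positive sesquilinear forms\<close>

locale sesquilinear_form =
  fixes F :: "'a::complex_hilbert \<Rightarrow> 'a \<Rightarrow> complex"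
  assumes add_left: "F (u1 + u2) v = F u1 v + F u2 v"
    and add_right: "F u (v1 + v2) = F u v1 + F u v2"
    and scaleC_left: "F (scaleC c u) v = c * F u v"
    and scaleC_right: "F u (scaleC c v) = cnj c * F u v"
begin

lemma scaleC_both: "F (scaleC c u) (scaleC c u) = of_real ((cmod c)\<^sup>2) * F u u"
  by (simp only: scaleC_left scaleC_right mult.assoc [symmetric] mult.commute [of "cnj c"]
      mult_cnj_cmod)

lemma expand_combination:
  "F (scaleC p u + scaleC q v) (scaleC p u + scaleC q v)
    = p * cnj p * F u u + p * cnj q * F u v + q * cnj p * F v u + q * cnj q * F v v"
  by (simp only: add_left add_right scaleC_left scaleC_right) (simp add: algebra_simps)

end

locale bounded_positive_form = sesquilinear_form F for F :: "'a::complex_hilbert \<Rightarrow> 'a \<Rightarrow> complex" +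
  fixes C :: real
  assumes hermitian: "F v u = cnj (F u v)"
    and nonneg: "0 \<le> Re (F u u)"
    and bounded: "Re (F u u) \<le> C * (norm u)\<^sup>2"
begin

lemma cauchy_schwarz_le:
  assumes "Re (F v v) \<le> M" and "0 < M"
  shows "(cmod (F u v))\<^sup>2 \<le> M * Re (F u u)"
proof -
  define b where "b = F u v"
  define t where "t = 1 / M"
  define w where "w = u - scaleC (of_real t * b) v"
  have bb: "b * cnj b = of_real ((cmod b)\<^sup>2)"
    by (rule mult_cnj_cmod)
  have "F w w = F u u - of_real t * (cnj b * b) - of_real t * (b * cnj b)
      + of_real t * of_real t * (b * cnj b) * F v v"
    unfolding w_def diff_conv_add_uminus scaleC_minus_left [symmetric]
    by (simp add: add_left add_right scaleC_left scaleC_right hermitian [of u v] b_def algebra_simps)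
  then have "Re (F w w) = Re (F u u) - 2 * t * (cmod b)\<^sup>2 + t * t * (cmod b)\<^sup>2 * Re (F v v)"
    by (simp add: bb mult.commute [of "cnj b" b])
  also have "\<dots> \<le> Re (F u u) - (cmod b)\<^sup>2 / M"
    using assms mult_left_mono [OF assms(1), of "t * t * (cmod b)\<^sup>2"]
    by (simp add: t_def field_simps power2_eq_square)
  finally have "(cmod b)\<^sup>2 / M \<le> Re (F u u)"
    using nonneg [of w] by simp
  then show ?thesis
    using assms(2) by (simp add: b_def pos_divide_le_eq mult.commute)
qed

lemma tendsto_zero_if_null:
  assumes null: "(\<lambda>n. Re (F (u n) (u n))) \<longlonglongrightarrow> 0"
    and bnd: "\<And>n. norm (v n) \<le> R"
  shows "(\<lambda>n. F (u n) (v n)) \<longlonglongrightarrow> 0"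
proof (rule Lim_null_comparison)
  define M where "M = \<bar>C\<bar> * R\<^sup>2 + 1"
  have M: "0 < M" by (simp add: M_def add_nonneg_pos)
  have "Re (F (v n) (v n)) \<le> M" for n
  proof -
    have "(norm (v n))\<^sup>2 \<le> R\<^sup>2"
      using power_mono [OF bnd norm_ge_zero] .
    then have "C * (norm (v n))\<^sup>2 \<le> \<bar>C\<bar> * R\<^sup>2"
      by (meson abs_ge_self mult_mono order.trans zero_le_power2 abs_ge_zero)
    then show ?thesis
      using bounded [of "v n"] by (simp add: M_def)
  qed
  then have "norm (F (u n) (v n)) \<le> sqrt (M * Re (F (u n) (u n)))" for n
    using cauchy_schwarz_le [OF _ M] by (simp add: real_le_rsqrt)
  then show "\<forall>\<^sub>F n in sequentially. norm (F (u n) (v n)) \<le> sqrt (M * Re (F (u n) (u n)))"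
    by simp
  show "(\<lambda>n. sqrt (M * Re (F (u n) (u n)))) \<longlonglongrightarrow> 0"
    using tendsto_real_sqrt [OF tendsto_mult_right_zero [OF null, of M]] by simp
qed

end

interpretation cinner: bounded_positive_form cinner 1
  by unfold_locales
    (simp_all add: cinner_add_left cinner_add_right cinner_scaleC_left cinner_scaleC_right
      Re_cinner_self)

lemma cauchy_schwarz: "cmod (cinner (x::'a::complex_hilbert) y) \<le> norm x * norm y"
proof (cases "y = 0")
  case False
  then have "(cmod (cinner x y))\<^sup>2 \<le> (norm y)\<^sup>2 * Re (cinner x x)"
    by (intro cinner.cauchy_schwarz_le) (simp_all add: Re_cinner_self)
  then show ?thesis
    by (simp add: Re_cinner_self power2_le_iff_abs_le power_mult_distrib [symmetric] mult.commute)
qed simp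

section \<open>Bounded operators and approximate eigenvalues\<close>

definition approx_eigenvalue :: "('a::complex_hilbert \<Rightarrow> 'a) \<Rightarrow> complex \<Rightarrow> bool" where
  "approx_eigenvalue A m \<longleftrightarrow> (\<forall>e>0. \<exists>u. norm u = 1 \<and> norm (A u - scaleC m u) < e)"

lemma bounded_clinear_opI:
  fixes T :: "'a::complex_hilbert \<Rightarrow> 'a"
  assumes "\<And>x y. T (x + y) = T x + T y"
    and scale: "\<And>c x. T (scaleC c x) = scaleC c (T x)"
    and "\<And>x. norm (T x) \<le> norm x * K"
  shows "bounded_clinear_op T"
  unfolding bounded_clinear_op_def
  using bounded_linear_intro [OF assms(1) _ assms(3)] scale by (simp add: scaleC_of_real [symmetric])

lemma bounded_clinear_op_add: "bounded_clinear_op A \<Longrightarrow> A (x + y) = A x + A y"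
  unfolding bounded_clinear_op_def by (simp add: linear_simps)

lemma bounded_clinear_op_diff: "bounded_clinear_op A \<Longrightarrow> A (x - y) = A x - A y"
  unfolding bounded_clinear_op_def by (simp add: linear_simps)

lemma bounded_clinear_op_zero: "bounded_clinear_op A \<Longrightarrow> A 0 = 0"
  unfolding bounded_clinear_op_def by (simp add: linear_simps)

lemma bounded_clinear_op_scaleC: "bounded_clinear_op A \<Longrightarrow> A (scaleC c x) = scaleC c (A x)"
  unfolding bounded_clinear_op_def by simp

lemma bounded_clinear_op_norm_le: "bounded_clinear_op A \<Longrightarrow> norm (A x) \<le> onorm A * norm x"
  unfolding bounded_clinear_op_def by (simp add: onorm)

lemmas bounded_clinear_op_simps =
  bounded_clinear_op_add bounded_clinear_op_diff bounded_clinear_op_zero bounded_clinear_op_scaleC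

lemma onorm_nonneg: "bounded_clinear_op A \<Longrightarrow> 0 \<le> onorm A"
  unfolding bounded_clinear_op_def by (simp add: onorm_pos_le)

lemma cmod_cinner_op_le:
  "bounded_clinear_op A \<Longrightarrow> cmod (cinner (A x) x) \<le> onorm A * (norm x)\<^sup>2"
  using cauchy_schwarz [of "A x" x]
    mult_right_mono [OF bounded_clinear_op_norm_le norm_ge_zero, of A x x]
  by (simp add: power2_eq_square mult.assoc)

lemma bounded_below_if_not_approx_eigenvalue:
  assumes A: "bounded_clinear_op A" and "\<not> approx_eigenvalue A m"
  obtains e where "e > 0" "\<And>z. e * norm z \<le> norm (A z - scaleC m z)"
proof -
  obtain e where e: "e > 0" and low: "\<And>u. norm u = 1 \<Longrightarrow> e \<le> norm (A u - scaleC m u)"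
    using assms(2) unfolding approx_eigenvalue_def by (auto simp: not_less)
  have "e * norm z \<le> norm (A z - scaleC m z)" for z
  proof (cases "z = 0")
    case False
    define u where "u = scaleC (of_real (1 / norm z)) z"
    have "A u - scaleC m u = scaleC (of_real (1 / norm z)) (A z - scaleC m z)"
      by (simp add: u_def bounded_clinear_op_scaleC [OF A] scaleC_diff_right scaleC_scaleC
          mult.commute)
    then have "norm (A u - scaleC m u) = norm (A z - scaleC m z) / norm z"
      by (simp add: norm_scaleC norm_divide)
    with low [of u] norm_normalize [OF False] False show ?thesis
      by (simp add: u_def pos_le_divide_eq)
  qed (simp add: bounded_clinear_op_zero [OF A])
  with e that show thesis by blast
qed

lemma approx_eigenvalue_in_spectrum:
  assumes "approx_eigenvalue A m"
  shows "m \<in> op_spectrum A"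
  unfolding op_spectrum_def
proof clarify
  fix B assume B: "bounded_clinear_op B" and BA: "\<forall>x. B (A x - scaleC m x) = x"
  define K where "K = onorm B"
  have K: "0 \<le> K" using onorm_nonneg [OF B] by (simp add: K_def)
  obtain u where u: "norm u = 1" "norm (A u - scaleC m u) < 1 / (K + 1)"
    using assms K unfolding approx_eigenvalue_def
    by (metis add_nonneg_pos zero_less_divide_1_iff zero_less_one)
  have "1 = norm (B (A u - scaleC m u))" using BA u(1) by simp
  also have "\<dots> \<le> K * norm (A u - scaleC m u)"
    using bounded_clinear_op_norm_le [OF B] by (simp add: K_def)
  also have "\<dots> \<le> K * (1 / (K + 1))" using u(2) K by (intro mult_left_mono) auto
  also have "\<dots> < 1" using K by (simp add: field_simps)
  finally show False by simp
qed

lemma approx_eigenvalue_of_product: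
  assumes A: "bounded_clinear_op A" and unit: "\<And>n. norm (x n) = 1"
    and lim: "(\<lambda>n. A (A (x n) - scaleC m' (x n)) - scaleC m (A (x n) - scaleC m' (x n))) \<longlonglongrightarrow> 0"
  shows "approx_eigenvalue A m \<or> approx_eigenvalue A m'"
proof (rule ccontr)
  assume "\<not> ?thesis"
  then obtain e1 e2 where e: "e1 > 0" "e2 > 0"
    and low1: "\<And>z. e1 * norm z \<le> norm (A z - scaleC m z)"
    and low2: "\<And>z. e2 * norm z \<le> norm (A z - scaleC m' z)"
    by (metis bounded_below_if_not_approx_eigenvalue [OF A])
  have "e1 * e2 \<le> norm (A (A (x n) - scaleC m' (x n)) - scaleC m (A (x n) - scaleC m' (x n)))" for n
  proof -
    have "e1 * e2 \<le> e1 * norm (A (x n) - scaleC m' (x n))"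
      using low2 [of "x n"] e(1) unit [of n] by simp
    also have "\<dots> \<le> norm (A (A (x n) - scaleC m' (x n)) - scaleC m (A (x n) - scaleC m' (x n)))"
      by (rule low1)
    finally show ?thesis .
  qed
  moreover obtain n
    where "norm (A (A (x n) - scaleC m' (x n)) - scaleC m (A (x n) - scaleC m' (x n))) < e1 * e2"
    using order_tendstoD(2)[OF tendsto_norm_zero [OF lim], of "e1 * e2"] e
    by (auto dest: eventually_happens)
  ultimately show False
    by (meson not_le)
qed

section \<open>Convexity of the numerical range\<close>

context sesquilinear_form
begin

lemma exists_rotation_real_cross:
  "\<exists>\<theta>. cmod \<theta> = 1 \<and> Im (F x (scaleC \<theta> y) + F (scaleC \<theta> y) x) = 0"
proof -
  define d where "d = F x y - cnj (F y x)"
  define \<theta> where "\<theta> = (if d = 0 then 1 else d / of_real (cmod d))"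
  have "Im (F x (scaleC \<theta> y) + F (scaleC \<theta> y) x) = Im (cnj \<theta> * d)"
    by (simp add: scaleC_left scaleC_right d_def algebra_simps)
  also have "cnj \<theta> * d = of_real (cmod d)"
  proof (cases "d = 0")
    case False
    then have "cnj \<theta> * d = d * cnj d / of_real (cmod d)"
      by (simp add: \<theta>_def)
    with False show ?thesis
      by (simp add: mult_cnj_cmod power2_eq_square)
  qed (simp add: \<theta>_def)
  finally show ?thesis
    by (intro exI [of _ \<theta>]) (simp add: \<theta>_def norm_divide)
qed

lemma combination_nonzero:
  assumes "x \<noteq> 0" "F x x = 0" "F y y = 1"
  shows "(1 - s) *\<^sub>R x + s *\<^sub>R y \<noteq> 0"
proof
  assume "(1 - s) *\<^sub>R x + s *\<^sub>R y = 0"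
  then have "scaleC (of_real (1 - s)) x + scaleC (of_real s) y = 0"
    by (simp only: scaleC_of_real)
  then have "scaleC (of_real (1 - s)) x = scaleC (- of_real s) y"
    by (simp add: scaleC_minus_left add_eq_0_iff)
  then have "F (scaleC (of_real (1 - s)) x) (scaleC (of_real (1 - s)) x)
      = F (scaleC (- of_real s) y) (scaleC (- of_real s) y)"
    by simp
  then have "s = 0"
    using assms(2,3) by (simp add: scaleC_both)
  with \<open>(1 - s) *\<^sub>R x + s *\<^sub>R y = 0\<close> assms(1) show False
    by simp
qed

text \<open>The core of the Toeplitz--Hausdorff theorem. The witness lies on the normalised segment
  from \<open>x\<close> to a rotation of \<open>y\<close> that makes the cross terms of \<open>F\<close> real.\<close>

lemma unit_values_interval:
  assumes x: "norm x = 1" "F x x = 0" and y: "norm y = 1" "F y y = 1"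
    and t: "0 \<le> t" "t \<le> 1"
  shows "\<exists>z. norm z = 1 \<and> F z z = of_real t"
proof -
  obtain \<theta> where \<theta>: "cmod \<theta> = 1" and real_cross: "Im (F x (scaleC \<theta> y) + F (scaleC \<theta> y) x) = 0"
    using exists_rotation_real_cross by blast
  define y' where "y' = scaleC \<theta> y"
  define r where "r = Re (F x y' + F y' x)"
  have y': "norm y' = 1" "F y' y' = 1"
    using y \<theta> by (simp_all add: y'_def norm_scaleC scaleC_both)
  have r: "F x y' + F y' x = of_real r"
    using real_cross by (simp add: r_def y'_def complex_eq_iff)
  define v where "v s = (1 - s) *\<^sub>R x + s *\<^sub>R y'" for s
  have v_scaleC: "v s = scaleC (of_real (1 - s)) x + scaleC (of_real s) y'" for s
    by (simp only: v_def scaleC_of_real)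
  have F_v: "F (v s) (v s) = of_real (s\<^sup>2 + s * (1 - s) * r)" for s
  proof -
    have "F (v s) (v s) = of_real ((1 - s) * s) * (F x y' + F y' x) + of_real (s * s)"
      unfolding v_scaleC expand_combination using x(2) y'(2) by (simp add: algebra_simps)
    then show ?thesis
      by (simp add: r power2_eq_square algebra_simps)
  qed
  have v_nonzero: "v s \<noteq> 0" for s
    unfolding v_def using x y' by (intro combination_nonzero) auto
  define g where "g s = (s\<^sup>2 + s * (1 - s) * r) / (norm (v s))\<^sup>2" for s
  have "continuous_on {0..1} g"
    unfolding g_def v_def using v_nonzero by (intro continuous_intros) (simp add: v_def)
  moreover have "g 0 = 0" "g 1 = 1"
    using y'(1) by (simp_all add: g_def v_def)
  ultimately obtain s where s: "0 \<le> s" "s \<le> 1" "g s = t"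
    using IVT' [of g 0 t 1] t by auto
  define z where "z = scaleC (of_real (1 / norm (v s))) (v s)"
  have "F z z = of_real (g s)"
    by (simp add: z_def scaleC_both F_v g_def norm_divide power_one_over)
  then show ?thesis
    using norm_normalize [OF v_nonzero] s(3) by (auto simp: z_def)
qed

end

lemma numerical_range_convex:
  fixes A :: "'a::complex_hilbert \<Rightarrow> 'a"
  assumes A: "bounded_clinear_op A"
  shows "convex (numerical_range A)"
proof (rule convexI)
  fix p q :: complex and s t :: real
  assume p: "p \<in> numerical_range A" and q: "q \<in> numerical_range A"
    and st: "0 \<le> s" "0 \<le> t" "s + t = 1"
  show "s *\<^sub>R p + t *\<^sub>R q \<in> numerical_range A"
  proof (cases "p = q")
    case True
    with p st(3) show ?thesis
      by (simp add: scaleR_left_distrib [symmetric])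
  next
    case False
    obtain x y where x: "norm x = 1" "p = cinner (A x) x" and y: "norm y = 1" "q = cinner (A y) y"
      using p q unfolding numerical_range_def by blast
    define F where "F u v = (cinner (A u) v - p * cinner u v) / (q - p)" for u v
    interpret sesquilinear_form F
      by unfold_locales
        (simp_all add: F_def bounded_clinear_op_simps [OF A] cinner_simps add_divide_distrib
          diff_divide_distrib algebra_simps)
    have "F x x = 0" "F y y = 1"
      using x y False by (simp_all add: F_def cinner_self_eq_1)
    then obtain z where z: "norm z = 1" "F z z = of_real t"
      using unit_values_interval [OF x(1) _ y(1)] st by fastforce
    have "cinner (A z) z = p + of_real t * (q - p)"
      using z False cinner_self_eq_1 [OF z(1)] by (simp add: F_def field_simps)
    also have "\<dots> = s *\<^sub>R p + t *\<^sub>R q"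
    proof -
      have s: "s = 1 - t"
        using st(3) by simp
      show ?thesis
        unfolding s by (simp add: scaleR_conv_of_real algebra_simps)
    qed
    finally show ?thesis
      using z(1) unfolding numerical_range_def by force
  qed
qed

section \<open>Supporting points of maximal norm\<close>

text \<open>The forms of the positive operators \<open>a - Re B\<close> and \<open>N\<^sup>2 - B\<^sup>*B\<close>; since the class provides
  no adjoints, the argument works with these forms instead of the operators.\<close>

definition re_defect_form :: "('a::complex_hilbert \<Rightarrow> 'a) \<Rightarrow> real \<Rightarrow> 'a \<Rightarrow> 'a \<Rightarrow> complex" where
  "re_defect_form B a u v = of_real a * cinner u v - (cinner (B u) v + cinner u (B v)) / 2"

definition norm_defect_form :: "('a::complex_hilbert \<Rightarrow> 'a) \<Rightarrow> real \<Rightarrow> 'a \<Rightarrow> 'a \<Rightarrow> complex" where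
  "norm_defect_form B N u v = of_real (N\<^sup>2) * cinner u v - cinner (B u) (B v)"

lemma Re_re_defect_form: "Re (re_defect_form B a u u) = a * (norm u)\<^sup>2 - Re (cinner (B u) u)"
  by (simp add: re_defect_form_def Re_cinner_self Re_cinner_commute [of u])

lemma Re_norm_defect_form: "Re (norm_defect_form B N u u) = N\<^sup>2 * (norm u)\<^sup>2 - (norm (B u))\<^sup>2"
  by (simp add: norm_defect_form_def Re_cinner_self)

lemma sesquilinear_form_re_defect:
  "bounded_clinear_op B \<Longrightarrow> sesquilinear_form (re_defect_form B a)"
  by unfold_locales
    (simp_all add: re_defect_form_def bounded_clinear_op_simps cinner_simps field_simps)

lemma sesquilinear_form_norm_defect:
  "bounded_clinear_op B \<Longrightarrow> sesquilinear_form (norm_defect_form B N)"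
  by unfold_locales
    (simp_all add: norm_defect_form_def bounded_clinear_op_simps cinner_simps field_simps)

lemma bounded_positive_form_re_defect:
  assumes B: "bounded_clinear_op B" and supp: "\<And>v. norm v = 1 \<Longrightarrow> Re (cinner (B v) v) \<le> a"
  shows "bounded_positive_form (re_defect_form B a) (\<bar>a\<bar> + onorm B)"
proof (rule bounded_positive_form.intro [OF sesquilinear_form_re_defect [OF B]], unfold_locales)
  show "re_defect_form B a v u = cnj (re_defect_form B a u v)" for u v
    by (simp add: re_defect_form_def field_simps)
  show "0 \<le> Re (re_defect_form B a u u)" for u
  proof (cases "u = 0")
    case False
    define v where "v = scaleC (of_real (1 / norm u)) u"
    have "cinner (B v) v = of_real (1 / norm u) * of_real (1 / norm u) * cinner (B u) u"
      by (simp add: v_def bounded_clinear_op_scaleC [OF B] cinner_scaleC_left cinner_scaleC_right)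
    then have "Re (cinner (B u) u) / (norm u)\<^sup>2 \<le> a"
      using supp [of v] norm_normalize [OF False] by (simp add: v_def power2_eq_square)
    with False show ?thesis
      by (simp add: Re_re_defect_form pos_divide_le_eq mult.commute)
  qed (simp add: re_defect_form_def)
  show "Re (re_defect_form B a u u) \<le> (\<bar>a\<bar> + onorm B) * (norm u)\<^sup>2" for u
    using cmod_cinner_op_le [OF B, of u] abs_Re_le_cmod [of "cinner (B u) u"]
      mult_right_mono [OF abs_ge_self [of a] zero_le_power2 [of "norm u"]]
    by (simp add: Re_re_defect_form algebra_simps)
qed

lemma bounded_positive_form_norm_defect:
  assumes B: "bounded_clinear_op B"
  shows "bounded_positive_form (norm_defect_form B (onorm B)) ((onorm B)\<^sup>2)"
proof (rule bounded_positive_form.intro [OF sesquilinear_form_norm_defect [OF B]], unfold_locales)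
  show "norm_defect_form B (onorm B) v u = cnj (norm_defect_form B (onorm B) u v)" for u v
    by (simp add: norm_defect_form_def)
  show "0 \<le> Re (norm_defect_form B (onorm B) u u)" for u
    using power_mono [OF bounded_clinear_op_norm_le [OF B, of u] norm_ge_zero]
    by (simp add: Re_norm_defect_form power_mult_distrib)
qed (simp add: Re_norm_defect_form)

lemma re_defect_form_shift:
  fixes a N :: real
  assumes B: "bounded_clinear_op B" and "norm x = 1"
  defines "w \<equiv> B x - scaleC (of_real a) x"
  shows "Re (re_defect_form B a w w) = (N\<^sup>2 - a\<^sup>2) * Re (re_defect_form B a x x)
      + Re (norm_defect_form B N x w) - 2 * a * Re (re_defect_form B a x w)"
proof -
  have "re_defect_form B a w w = of_real (N\<^sup>2 - a\<^sup>2) * re_defect_form B a x x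
      + (norm_defect_form B N x w + cnj (norm_defect_form B N x w)) / 2
      - of_real a * (re_defect_form B a x w + cnj (re_defect_form B a x w))"
    using cinner_self_eq_1 [OF assms(2)]
    by (simp add: re_defect_form_def norm_defect_form_def w_def bounded_clinear_op_simps [OF B]
        cinner_simps field_simps power2_eq_square)
  then show ?thesis
    by simp
qed

lemma cinner_quadratic_expression:
  fixes a N :: real and x :: "'a::complex_hilbert"
  assumes B: "bounded_clinear_op B"
  defines "w \<equiv> B x - scaleC (of_real a) x"
  shows "cinner (B (B x) - scaleC (of_real (2 * a)) (B x) + scaleC (of_real (N\<^sup>2)) x) v
    = norm_defect_form B N x v - of_real (2 * a) * re_defect_form B a x v
      - 2 * re_defect_form B a w v"
  by (simp add: re_defect_form_def norm_defect_form_def w_def bounded_clinear_op_simps [OF B]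
      cinner_simps field_simps power2_eq_square)

lemma norm_shift_le:
  assumes B: "bounded_clinear_op B" and x: "norm x = 1"
  shows "norm (B x - scaleC (of_real a) x) \<le> onorm B + \<bar>a\<bar>"
  using norm_triangle_ineq4 [of "B x" "scaleC (of_real a) x"] bounded_clinear_op_norm_le [OF B, of x]
    x
  by (simp add: norm_scaleC)

lemma norm_quadratic_le:
  assumes B: "bounded_clinear_op B" and x: "norm x = 1"
  shows "norm (B (B x) - scaleC (of_real (2 * a)) (B x) + scaleC (of_real ((onorm B)\<^sup>2)) x)
    \<le> 2 * (onorm B)\<^sup>2 + 2 * \<bar>a\<bar> * onorm B"
proof -
  define N where "N = onorm B"
  have N: "0 \<le> N"
    using onorm_nonneg [OF B] by (simp add: N_def)
  have Bx: "norm (B x) \<le> N"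
    using bounded_clinear_op_norm_le [OF B, of x] x by (simp add: N_def)
  have "norm (B (B x)) \<le> N * norm (B x)"
    using bounded_clinear_op_norm_le [OF B, of "B x"] by (simp add: N_def)
  also have "\<dots> \<le> N * N"
    by (rule mult_left_mono [OF Bx N])
  finally have BBx: "norm (B (B x)) \<le> N * N" .
  have "norm (B (B x) - scaleC (of_real (2 * a)) (B x) + scaleC (of_real (N\<^sup>2)) x)
      \<le> norm (B (B x)) + 2 * \<bar>a\<bar> * norm (B x) + N\<^sup>2"
    using norm_triangle_ineq [of "B (B x) - scaleC (of_real (2 * a)) (B x)" "scaleC (of_real (N\<^sup>2)) x"]
      norm_triangle_ineq4 [of "B (B x)" "scaleC (of_real (2 * a)) (B x)"] x N
    by (simp add: norm_scaleC norm_power)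
  also have "\<dots> \<le> 2 * N\<^sup>2 + 2 * \<bar>a\<bar> * N"
    using BBx mult_left_mono [OF Bx, of "2 * \<bar>a\<bar>"] by (simp add: power2_eq_square)
  finally show ?thesis
    by (simp add: N_def)
qed

lemma quadratic_tendsto_zero:
  fixes B :: "'a::complex_hilbert \<Rightarrow> 'a" and x :: "nat \<Rightarrow> 'a" and a :: real
  assumes B: "bounded_clinear_op B"
    and supp: "\<And>v. norm v = 1 \<Longrightarrow> Re (cinner (B v) v) \<le> a"
    and unit: "\<And>n. norm (x n) = 1"
    and lim_norm: "(\<lambda>n. norm (B (x n))) \<longlonglongrightarrow> onorm B"
    and lim_re: "(\<lambda>n. Re (cinner (B (x n)) (x n))) \<longlonglongrightarrow> a"
  shows "(\<lambda>n. B (B (x n)) - scaleC (of_real (2 * a)) (B (x n))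
      + scaleC (of_real ((onorm B)\<^sup>2)) (x n)) \<longlonglongrightarrow> 0"
proof -
  define N where "N = onorm B"
  interpret Q: bounded_positive_form "re_defect_form B a" "\<bar>a\<bar> + N"
    unfolding N_def by (rule bounded_positive_form_re_defect [OF B supp])
  interpret P: bounded_positive_form "norm_defect_form B N" "N\<^sup>2"
    unfolding N_def by (rule bounded_positive_form_norm_defect [OF B])
  define w where "w n = B (x n) - scaleC (of_real a) (x n)" for n
  define y where
    "y n = B (B (x n)) - scaleC (of_real (2 * a)) (B (x n)) + scaleC (of_real (N\<^sup>2)) (x n)" for n
  have w_bound: "norm (w n) \<le> N + \<bar>a\<bar>" for n
    unfolding w_def N_def by (rule norm_shift_le [OF B unit])
  have y_bound: "norm (y n) \<le> 2 * N\<^sup>2 + 2 * \<bar>a\<bar> * N" for n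
    unfolding y_def N_def by (rule norm_quadratic_le [OF B unit])
  have Q_null_x: "(\<lambda>n. Re (re_defect_form B a (x n) (x n))) \<longlonglongrightarrow> 0"
    using tendsto_diff [OF tendsto_const lim_re, of a] unit by (simp add: Re_re_defect_form)
  have P_null_x: "(\<lambda>n. Re (norm_defect_form B N (x n) (x n))) \<longlonglongrightarrow> 0"
    using tendsto_diff [OF tendsto_const tendsto_power [OF lim_norm, of 2], of "N\<^sup>2"] unit
    by (simp add: Re_norm_defect_form N_def)
  have "(\<lambda>n. (N\<^sup>2 - a\<^sup>2) * Re (re_defect_form B a (x n) (x n))
        + Re (norm_defect_form B N (x n) (w n)) - 2 * a * Re (re_defect_form B a (x n) (w n)))
      \<longlonglongrightarrow> (N\<^sup>2 - a\<^sup>2) * 0 + Re 0 - 2 * a * Re 0"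
    by (intro tendsto_intros Q_null_x P.tendsto_zero_if_null [OF P_null_x w_bound]
        Q.tendsto_zero_if_null [OF Q_null_x w_bound])
  then have Q_null_w: "(\<lambda>n. Re (re_defect_form B a (w n) (w n))) \<longlonglongrightarrow> 0"
    by (simp add: w_def re_defect_form_shift [OF B unit, where N = N])
  have y_expr: "cinner (y n) v = norm_defect_form B N (x n) v
      - of_real (2 * a) * re_defect_form B a (x n) v - 2 * re_defect_form B a (w n) v" for n v
    unfolding y_def w_def by (rule cinner_quadratic_expression [OF B])
  have "(\<lambda>n. cinner (y n) (y n)) \<longlonglongrightarrow> 0 - of_real (2 * a) * 0 - 2 * 0"
    unfolding y_expr
    by (intro tendsto_intros P.tendsto_zero_if_null [OF P_null_x y_bound]
        Q.tendsto_zero_if_null [OF Q_null_x y_bound] Q.tendsto_zero_if_null [OF Q_null_w y_bound])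
  then have "(\<lambda>n. (norm (y n))\<^sup>2) \<longlonglongrightarrow> 0"
    using tendsto_Re by (fastforce simp: Re_cinner_self)
  then have "(\<lambda>n. norm (y n)) \<longlonglongrightarrow> 0"
    using tendsto_real_sqrt by fastforce
  then show ?thesis
    using tendsto_norm_zero_cancel by (simp only: y_def N_def)
qed

text \<open>With \<open>m, m' = a \<plusminus> i\<surd>(N\<^sup>2 - a\<^sup>2)\<close> the operator \<open>B\<^sup>2 - 2aB + N\<^sup>2\<close> factors as
  \<open>(B - m)(B - m')\<close>.\<close>

lemma approx_eigenvalue_at_supporting_point:
  fixes B :: "'a::complex_hilbert \<Rightarrow> 'a" and x :: "nat \<Rightarrow> 'a" and a :: real
  assumes B: "bounded_clinear_op B"
    and supp: "\<And>v. norm v = 1 \<Longrightarrow> Re (cinner (B v) v) \<le> a"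
    and unit: "\<And>n. norm (x n) = 1"
    and lim_norm: "(\<lambda>n. norm (B (x n))) \<longlonglongrightarrow> onorm B"
    and lim_re: "(\<lambda>n. Re (cinner (B (x n)) (x n))) \<longlonglongrightarrow> a"
  shows "\<exists>m. cmod m = onorm B \<and> approx_eigenvalue B m"
proof -
  define N where "N = onorm B"
  have N: "0 \<le> N"
    using onorm_nonneg [OF B] by (simp add: N_def)
  have "\<bar>a\<bar> \<le> N"
  proof (rule LIMSEQ_le_const2 [OF tendsto_rabs [OF lim_re]])
    show "\<exists>n0. \<forall>n\<ge>n0. \<bar>Re (cinner (B (x n)) (x n))\<bar> \<le> N"
    proof (intro exI allI impI)
      fix n
      show "\<bar>Re (cinner (B (x n)) (x n))\<bar> \<le> N"
        using order_trans [OF abs_Re_le_cmod cmod_cinner_op_le [OF B, of "x n"]] unit [of n]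
        by (simp add: N_def)
    qed
  qed
  then have c: "(sqrt (N\<^sup>2 - a\<^sup>2))\<^sup>2 = N\<^sup>2 - a\<^sup>2"
    using power_mono [of "\<bar>a\<bar>" N 2] by simp
  define m where "m = Complex a (sqrt (N\<^sup>2 - a\<^sup>2))"
  define m' where "m' = Complex a (- sqrt (N\<^sup>2 - a\<^sup>2))"
  have cmod_m: "cmod m = N" "cmod m' = N"
    using c N by (simp_all add: m_def m'_def cmod_def)
  have sum: "m' + m = of_real (2 * a)"
    by (simp add: m_def m'_def complex_eq_iff)
  have prod: "m * m' = of_real (N\<^sup>2)"
    using c by (simp add: m_def m'_def complex_eq_iff power2_eq_square)
  have "B (B (x n) - scaleC m' (x n)) - scaleC m (B (x n) - scaleC m' (x n))
      = B (B (x n)) - scaleC (m' + m) (B (x n)) + scaleC (m * m') (x n)" for n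
    by (simp add: bounded_clinear_op_simps [OF B] scaleC_diff_right scaleC_scaleC
        scaleC_add_left mult.commute)
  then have factor: "B (B (x n) - scaleC m' (x n)) - scaleC m (B (x n) - scaleC m' (x n))
      = B (B (x n)) - scaleC (of_real (2 * a)) (B (x n)) + scaleC (of_real (N\<^sup>2)) (x n)" for n
    by (simp only: sum prod)
  have "(\<lambda>n. B (B (x n) - scaleC m' (x n)) - scaleC m (B (x n) - scaleC m' (x n))) \<longlonglongrightarrow> 0"
    unfolding factor N_def by (rule quadratic_tendsto_zero [OF assms])
  then have "approx_eigenvalue B m \<or> approx_eigenvalue B m'"
    by (rule approx_eigenvalue_of_product [OF B unit])
  then show ?thesis
    using cmod_m by (auto simp: N_def)
qed

lemma supporting_hyperplane_convex_frontier:
  fixes S :: "'a::euclidean_space set"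
  assumes S: "convex S" and z: "z \<in> closure S" "z \<notin> interior S"
  obtains a where "a \<noteq> 0" "\<And>y. y \<in> S \<Longrightarrow> a \<bullet> y \<le> a \<bullet> z"
proof (cases "interior S = {}")
  case True
  then obtain a b where a: "a \<noteq> 0" "S \<subseteq> {x. a \<bullet> x = b}"
    using empty_interior_subset_hyperplane [OF S] by blast
  then have "closure S \<subseteq> {x. a \<bullet> x = b}"
    by (intro closure_minimal) (simp_all add: closed_hyperplane)
  with z(1) have "a \<bullet> z = b"
    by blast
  with a show thesis
    by (intro that [of a]) auto
next
  case False
  then have "z \<notin> rel_interior S"
    using z(2) interior_rel_interior_gen [of S] by metis
  then obtain a where "a \<noteq> 0" "\<And>y. y \<in> closure S \<Longrightarrow> a \<bullet> z \<le> a \<bullet> y"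
    using supporting_hyperplane_relative_frontier [OF S z(1)] by metis
  then show thesis
    by (intro that [of "- a"]) (auto simp: closure_subset [THEN subsetD])
qed

lemma Re_cnj_mult: "Re (cnj a * z) = a \<bullet> z"
  by (simp add: inner_complex_def)

lemma bounded_clinear_op_rotate:
  assumes A: "bounded_clinear_op A" and c: "cmod c = 1"
  shows "bounded_clinear_op (\<lambda>v. scaleC c (A v))"
  by (rule bounded_clinear_opI [where K = "onorm A"])
    (simp_all add: bounded_clinear_op_simps [OF A] scaleC_add_right scaleC_scaleC mult.commute
      norm_scaleC c bounded_clinear_op_norm_le [OF A])

lemma onorm_rotate: "cmod c = 1 \<Longrightarrow> onorm (\<lambda>v. scaleC c (A v)) = onorm A"
  by (simp add: onorm_def norm_scaleC)

lemma approx_eigenvalue_rotate: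
  assumes w: "cmod w = 1" and "approx_eigenvalue (\<lambda>v. scaleC (cnj w) (A v)) m"
  shows "approx_eigenvalue A (w * m)"
proof -
  have "A u - scaleC (w * m) u = scaleC w (scaleC (cnj w) (A u) - scaleC m u)" for u
    using w by (simp add: scaleC_diff_right scaleC_scaleC mult_cnj_cmod scaleC_one)
  with assms show ?thesis
    by (simp add: approx_eigenvalue_def norm_scaleC)
qed

text \<open>Rotate the supporting line into a vertical line \<open>Re z = const\<close>.\<close>

lemma approx_eigenvalue_at_supporting_line:
  assumes A: "bounded_clinear_op A" and unit: "\<And>n. norm (x n) = 1"
    and lim_norm: "(\<lambda>n. norm (A (x n))) \<longlonglongrightarrow> onorm A"
    and lim: "(\<lambda>n. cinner (A (x n)) (x n)) \<longlonglongrightarrow> l"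
    and a: "a \<noteq> 0" and supp: "\<And>z. z \<in> numerical_range A \<Longrightarrow> a \<bullet> z \<le> a \<bullet> l"
  shows "\<exists>m. cmod m = onorm A \<and> approx_eigenvalue A m"
proof -
  define w where "w = a / of_real (cmod a)"
  define B where "B v = scaleC (cnj w) (A v)" for v
  have w: "cmod w = 1" "cmod (cnj w) = 1"
    using a by (simp_all add: w_def norm_divide)
  have B: "bounded_clinear_op B"
    unfolding B_def by (rule bounded_clinear_op_rotate [OF A w(2)])
  have onorm_B: "onorm B = onorm A"
    unfolding B_def by (rule onorm_rotate [OF w(2)])
  have cinner_B: "Re (cinner (B v) v) = a \<bullet> cinner (A v) v / cmod a" for v
    using a by (simp add: B_def cinner_scaleC_left w_def Re_cnj_mult [symmetric] Re_divide_of_real)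
  have "\<exists>m. cmod m = onorm B \<and> approx_eigenvalue B m"
  proof (rule approx_eigenvalue_at_supporting_point [OF B _ unit])
    show "Re (cinner (B v) v) \<le> a \<bullet> l / cmod a" if "norm v = 1" for v
    proof -
      have "cinner (A v) v \<in> numerical_range A"
        using that by (auto simp: numerical_range_def)
      then show ?thesis
        by (simp add: cinner_B supp divide_right_mono)
    qed
    show "(\<lambda>n. norm (B (x n))) \<longlonglongrightarrow> onorm B"
      using lim_norm w by (simp add: B_def norm_scaleC onorm_B)
    show "(\<lambda>n. Re (cinner (B (x n)) (x n))) \<longlonglongrightarrow> a \<bullet> l / cmod a"
      unfolding cinner_B using a by (intro tendsto_intros lim) simp
  qed
  then obtain m where "cmod m = onorm A" "approx_eigenvalue B m"
    using onorm_B by auto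
  then show ?thesis
    unfolding B_def using approx_eigenvalue_rotate [OF w(1)] w(1) by (metis norm_mult mult_1)
qed

lemma normaloid_if_max_numerical_range_meets_frontier:
  assumes A: "bounded_clinear_op A" and l: "l \<in> max_numerical_range A"
    "l \<in> frontier (numerical_range A)"
  shows "normaloid A"
proof -
  obtain x where "\<And>n. norm (x n) = 1" "(\<lambda>n. norm (A (x n))) \<longlonglongrightarrow> onorm A"
    "(\<lambda>n. cinner (A (x n)) (x n)) \<longlonglongrightarrow> l"
    using l(1) unfolding max_numerical_range_def by blast
  moreover obtain a where "a \<noteq> 0" "\<And>z. z \<in> numerical_range A \<Longrightarrow> a \<bullet> z \<le> a \<bullet> l"
    using supporting_hyperplane_convex_frontier [OF numerical_range_convex [OF A]] l(2)
    unfolding frontier_def by blast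
  ultimately obtain m where "cmod m = onorm A" "approx_eigenvalue A m"
    using approx_eigenvalue_at_supporting_line [OF A] by metis
  then show ?thesis
    unfolding normaloid_def using approx_eigenvalue_in_spectrum by blast
qed

section \<open>Spectral values of maximal modulus\<close>

lemma surj_shift_if_onorm_less:
  assumes A: "bounded_clinear_op A" and mu: "onorm A < cmod mu"
  shows "\<exists>u. A u - scaleC mu u = z"
proof -
  define G where "G u = scaleC (1 / mu) (A u - z)" for u
  have mu0: "0 < cmod mu"
    using mu onorm_nonneg [OF A] by linarith
  have "\<exists>!u. G u = u"
  proof (rule banach_fix_type [where c = "onorm A / cmod mu"])
    show "0 \<le> onorm A / cmod mu" "onorm A / cmod mu < 1"
      using mu mu0 onorm_nonneg [OF A] by (simp_all add: pos_divide_less_eq)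
    show "\<forall>u v. dist (G u) (G v) \<le> onorm A / cmod mu * dist u v"
    proof (intro allI)
      fix u v
      have "dist (G u) (G v) = norm (A (u - v)) / cmod mu"
        by (simp add: G_def dist_norm bounded_clinear_op_diff [OF A] scaleC_diff_right [symmetric]
            norm_scaleC norm_divide)
      also have "\<dots> \<le> onorm A * norm (u - v) / cmod mu"
        by (intro divide_right_mono bounded_clinear_op_norm_le [OF A]) simp
      finally show "dist (G u) (G v) \<le> onorm A / cmod mu * dist u v"
        by (simp add: dist_norm)
    qed
  qed
  then obtain u where "scaleC mu (G u) = scaleC mu u"
    by metis
  then have "A u - z = scaleC mu u"
    using mu0 by (simp add: G_def scaleC_scaleC scaleC_one)
  then show ?thesis
    by (intro exI [of _ u]) (simp add: algebra_simps)
qed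

text \<open>Solve \<open>(A - m) u = y\<close> as the fixed point of the contraction \<open>z \<mapsto> y - (\<mu> - m) R z\<close>,
  where \<open>R\<close> is a right inverse of \<open>A - \<mu>\<close>, Lipschitz with constant \<open>1 / c\<close>.\<close>

lemma surj_shift_perturb:
  assumes A: "bounded_clinear_op A"
    and surj: "\<And>z. \<exists>u. A u - scaleC mu u = z"
    and low: "\<And>z. c * norm z \<le> norm (A z - scaleC mu z)"
    and c: "cmod (mu - m) < c"
  shows "\<exists>u. A u - scaleC m u = y"
proof -
  define R where "R z = (SOME u. A u - scaleC mu u = z)" for z
  have R: "A (R z) - scaleC mu (R z) = z" for z
    unfolding R_def by (rule someI_ex [OF surj])
  have c0: "0 < c"
    using c norm_ge_zero order.strict_trans1 by blast
  have R_lipschitz: "c * norm (R z - R z') \<le> norm (z - z')" for z z'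
    using low [of "R z - R z'"] R [of z] R [of z']
    by (simp add: bounded_clinear_op_diff [OF A] scaleC_diff_right algebra_simps)
  define G where "G z = y - scaleC (mu - m) (R z)" for z
  have "\<exists>!z. G z = z"
  proof (rule banach_fix_type [where c = "cmod (mu - m) / c"])
    show "0 \<le> cmod (mu - m) / c" "cmod (mu - m) / c < 1"
      using c c0 by simp_all
    show "\<forall>u v. dist (G u) (G v) \<le> cmod (mu - m) / c * dist u v"
    proof (intro allI)
      fix u v
      have "dist (G u) (G v) = cmod (mu - m) * norm (R u - R v)"
        by (simp add: G_def dist_norm scaleC_diff_right [symmetric] norm_scaleC
            norm_minus_commute)
      also have "\<dots> \<le> cmod (mu - m) * (norm (u - v) / c)"
        using R_lipschitz [of u v] c0 by (intro mult_left_mono) (simp_all add: field_simps)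
      finally show "dist (G u) (G v) \<le> cmod (mu - m) / c * dist u v"
        by (simp add: dist_norm)
    qed
  qed
  then obtain z where z: "G z = z"
    by blast
  have "A (R z) - scaleC m (R z) = (A (R z) - scaleC mu (R z)) + scaleC (mu - m) (R z)"
    by (simp add: scaleC_diff_left)
  also have "\<dots> = y"
    using z by (simp add: R G_def algebra_simps)
  finally show ?thesis
    by blast
qed

lemma not_in_spectrum_if_bounded_below_surj:
  assumes A: "bounded_clinear_op A" and e: "e > 0"
    and low: "\<And>z. e * norm z \<le> norm (A z - scaleC m z)"
    and surj: "\<And>y. \<exists>u. A u - scaleC m u = y"
  shows "m \<notin> op_spectrum A"
proof -
  define T where "T u = A u - scaleC m u" for u
  have T_add: "T (u + v) = T u + T v" and T_scaleC: "T (scaleC c u) = scaleC c (T u)"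
    and T_diff: "T (u - v) = T u - T v" for u v c
    by (simp_all add: T_def bounded_clinear_op_simps [OF A] scaleC_add_right
        scaleC_diff_right scaleC_scaleC mult.commute algebra_simps)
  have T_inj: "u = v" if "T u = T v" for u v
    using low [of "u - v"] that e by (simp add: T_def [symmetric] T_diff mult_le_0_iff)
  define S where "S y = (SOME u. T u = y)" for y
  have TS: "T (S y) = y" for y
    unfolding S_def T_def by (rule someI_ex [OF surj])
  have ST: "S (T u) = u" for u
    by (rule T_inj) (simp add: TS)
  have "bounded_clinear_op S"
  proof (rule bounded_clinear_opI [where K = "1 / e"])
    show "S (u + v) = S u + S v" and "S (scaleC c u) = scaleC c (S u)" for u v c
      by (simp_all add: T_inj TS T_add T_scaleC)
    show "norm (S y) \<le> norm y * (1 / e)" for y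
      using low [of "S y"] TS [of y] e by (simp add: T_def field_simps)
  qed
  with TS ST show ?thesis
    unfolding op_spectrum_def T_def by blast
qed

text \<open>Otherwise \<open>A - m\<close> is bounded below; pushing \<open>m\<close> radially out of the disc of radius
  \<open>\<parallel>A\<parallel>\<close>, where \<open>A - \<mu>\<close> is onto, shows that \<open>A - m\<close> is onto as well, hence invertible.\<close>

lemma approx_eigenvalue_if_spectrum_max_modulus:
  assumes A: "bounded_clinear_op A" and m: "m \<in> op_spectrum A" "cmod m = onorm A"
  shows "approx_eigenvalue A m"
proof (rule ccontr)
  assume "\<not> approx_eigenvalue A m"
  then obtain e where e: "e > 0" and low: "\<And>z. e * norm z \<le> norm (A z - scaleC m z)"
    by (metis bounded_below_if_not_approx_eigenvalue [OF A])
  define d where "d = e / 3"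
  define mu where "mu = m + of_real d * (if m = 0 then 1 else sgn m)"
  have d: "0 < d"
    using e by (simp add: d_def)
  have mu_m: "cmod (mu - m) = d"
    using d by (simp add: mu_def norm_mult norm_sgn)
  have "cmod mu = cmod m + d"
  proof (cases "m = 0")
    case False
    then have "mu = m * of_real (1 + d / cmod m)"
      by (simp add: mu_def sgn_div_norm scaleR_conv_of_real field_simps)
    then have "cmod mu = cmod m * \<bar>1 + d / cmod m\<bar>"
      by (simp only: norm_mult norm_of_real)
    also have "\<bar>1 + d / cmod m\<bar> = 1 + d / cmod m"
      using d by simp
    finally show ?thesis
      using False by (simp add: distrib_left)
  qed (simp add: mu_def d less_imp_le)
  then have surj_mu: "\<exists>u. A u - scaleC mu u = z" for z
    using surj_shift_if_onorm_less [OF A] m(2) d by simp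
  have low_mu: "(e - d) * norm z \<le> norm (A z - scaleC mu z)" for z
  proof -
    have "A z - scaleC mu z = (A z - scaleC m z) - scaleC (mu - m) z"
      by (simp add: scaleC_diff_left)
    then show ?thesis
      using low [of z] norm_triangle_ineq2 [of "A z - scaleC m z" "scaleC (mu - m) z"]
      by (simp add: norm_scaleC mu_m algebra_simps)
  qed
  have "\<exists>u. A u - scaleC m u = y" for y
    using surj_shift_perturb [OF A surj_mu low_mu, of m] mu_m e by (simp add: d_def)
  then have "m \<notin> op_spectrum A"
    by (rule not_in_spectrum_if_bounded_below_surj [OF A e low])
  with m(1) show False
    by simp
qed

lemma numerical_range_subset_cball:
  assumes A: "bounded_clinear_op A"
  shows "numerical_range A \<subseteq> cball 0 (onorm A)"
proof
  fix z assume "z \<in> numerical_range A"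
  then obtain x where "norm x = 1" "z = cinner (A x) x"
    unfolding numerical_range_def by blast
  with cmod_cinner_op_le [OF A, of x] show "z \<in> cball 0 (onorm A)"
    by simp
qed

lemma approx_eigenvalue_seq:
  assumes "approx_eigenvalue A m"
  obtains x where "\<And>n. norm (x n) = 1" "(\<lambda>n. A (x n) - scaleC m (x n)) \<longlonglongrightarrow> 0"
proof -
  have "\<forall>n. \<exists>u. norm u = 1 \<and> norm (A u - scaleC m u) < inverse (real (Suc n))"
    using assms unfolding approx_eigenvalue_def by simp
  then obtain x where x: "\<And>n. norm (x n) = 1"
    and small: "\<And>n. norm (A (x n) - scaleC m (x n)) < inverse (real (Suc n))"
    by metis
  have "(\<lambda>n. A (x n) - scaleC m (x n)) \<longlonglongrightarrow> 0"
    using small less_imp_le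
    by (intro Lim_null_comparison [OF _ LIMSEQ_inverse_real_of_nat]) (auto intro: always_eventually)
  with x that show thesis
    by blast
qed

lemma max_numerical_range_frontier_if_approx_eigenvalue:
  assumes A: "bounded_clinear_op A" and m: "approx_eigenvalue A m" "cmod m = onorm A"
  shows "m \<in> max_numerical_range A \<inter> frontier (numerical_range A)"
proof -
  obtain x where unit: "\<And>n. norm (x n) = 1" and lim: "(\<lambda>n. A (x n) - scaleC m (x n)) \<longlonglongrightarrow> 0"
    using approx_eigenvalue_seq [OF m(1)] by blast
  have "\<bar>norm (A (x n)) - cmod m\<bar> \<le> norm (A (x n) - scaleC m (x n))" for n
    using norm_triangle_ineq3 [of "A (x n)" "scaleC m (x n)"] unit [of n] by (simp add: norm_scaleC)
  then have "(\<lambda>n. norm (A (x n)) - cmod m) \<longlonglongrightarrow> 0"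
    by (intro Lim_null_comparison [OF _ tendsto_norm_zero [OF lim]]) simp
  then have lim_norm: "(\<lambda>n. norm (A (x n))) \<longlonglongrightarrow> onorm A"
    using m(2) Lim_transform2 tendsto_const by (force simp: LIM_zero_iff)
  have "cinner (A (x n)) (x n) - m = cinner (A (x n) - scaleC m (x n)) (x n)" for n
    using cinner_self_eq_1 [OF unit [of n]] by (simp add: cinner_simps)
  then have "cmod (cinner (A (x n)) (x n) - m) \<le> norm (A (x n) - scaleC m (x n))" for n
    using cauchy_schwarz [of "A (x n) - scaleC m (x n)" "x n"] unit [of n] by simp
  then have "(\<lambda>n. cinner (A (x n)) (x n) - m) \<longlonglongrightarrow> 0"
    by (intro Lim_null_comparison [OF _ tendsto_norm_zero [OF lim]]) simp
  then have lim_W: "(\<lambda>n. cinner (A (x n)) (x n)) \<longlonglongrightarrow> m"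
    by (simp add: LIM_zero_iff)
  have "m \<in> max_numerical_range A"
    unfolding max_numerical_range_def using unit lim_norm lim_W by blast
  moreover have "m \<in> closure (numerical_range A)"
    unfolding closure_sequential numerical_range_def
    by (intro exI [of _ "\<lambda>n. cinner (A (x n)) (x n)"]) (use unit lim_W in blast)
  moreover have "m \<notin> interior (numerical_range A)"
    using interior_mono [OF numerical_range_subset_cball [OF A]] m(2) by auto
  ultimately show ?thesis
    by (simp add: frontier_def)
qed

theorem theorem2:
  fixes A :: "'a::complex_hilbert \<Rightarrow> 'a"
  assumes "\<exists>x::'a. x \<noteq> 0"
    and "bounded_clinear_op A"
  shows "max_numerical_range A \<inter> frontier (numerical_range A) \<noteq> {} \<longleftrightarrow> normaloid A"
proof
  assume "max_numerical_range A \<inter> frontier (numerical_range A) \<noteq> {}"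
  then obtain l where "l \<in> max_numerical_range A" "l \<in> frontier (numerical_range A)"
    by blast
  then show "normaloid A"
    by (rule normaloid_if_max_numerical_range_meets_frontier [OF assms(2)])
next
  assume "normaloid A"
  then obtain m where m: "m \<in> op_spectrum A" "cmod m = onorm A"
    unfolding normaloid_def by blast
  then have "approx_eigenvalue A m"
    by (rule approx_eigenvalue_if_spectrum_max_modulus [OF assms(2)])
  then show "max_numerical_range A \<inter> frontier (numerical_range A) \<noteq> {}"
    using max_numerical_range_frontier_if_approx_eigenvalue [OF assms(2) _ m(2)] by blast
qed

end
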